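(* Let $F$ be a face of $V_O$ and let $\lambda\ne\mu$ be two elements of $\Xi_1$ such that $F\subseteq H_\lambda\cap H_\mu$. Then $\mathrm{supp}(\lambda)$ and $\mathrm{supp}(\mu)$ are consistent in their orientations: there is no oriented edge $e\in\mathbb E$ with $e\in\mathrm{supp}(\lambda)$ and $\bar e\in\mathrm{supp}(\mu)$.
   Context: $G=(V,E)$ is a finite connected graph, possibly with parallel edges and loops; $\mathbb E$ is the set of oriented edges ($e$ and its reverse $\bar e$). Real $1$-chains $x:\mathbb E\to\mathbb R$ satisfy $x_{\bar e}=-x_e$; $\langle x,y\rangle=\sum_{e\in E}x_ey_e$, $q(x)=\langle x,x\rangle$. A flow satisfies $\sum_{e\text{ with tail }v}x_e=0$ at every vertex $v$; $H$ is the space of real flows and $\Lambda$ the lattice of integer flows. $V_O=\{x\in H: q(x)\le q(x-\mu)\ \forall\mu\in\Lambda\}$ is the Voronoi cell of the origin. For a flow $x$, $\mathrm{supp}(x)=\{e\in\mathbb E: x_e>0\}$. A circuit is an orientation of a cycle as a directed cycle; $x^C_e=1$ if $e\in C$, $-1$ if $\bar e\in C$, $0$ otherwise. $\Xi_1=\{x^C: C\text{ a circuit}\}$. For $\lambda\in\Xi_1$, $H_\lambda=\{x\in H: 2\langle x,\lambda\rangle=q(\lambda)\}$. *)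

theory Defs
  imports "HOL-Analysis.Analysis"
begin

text \<open>A finite connected multigraph (parallel edges and loops allowed).
  Vertices are the elements of a finite type 'v, edges the elements of a finite
  type 'e; each edge e carries a reference orientation with tail src e and head tgt e.
  An oriented edge is a pair (e, d): (e, True) is e with its reference orientation,
  (e, False) is its reverse.  Real 1-chains x with x(rev e) = - x e are
  represented by their values on reference orientations: vectors in real^'e.\<close>

type_synonym 'e oedge = "'e \<times> bool"

definition orev :: "'e oedge \<Rightarrow> 'e oedge" where
  "orev oe = (fst oe, \<not> snd oe)"

definition otail :: "('e \<Rightarrow> 'v) \<Rightarrow> ('e \<Rightarrow> 'v) \<Rightarrow> 'e oedge \<Rightarrow> 'v" where
  "otail src tgt oe = (if snd oe then src (fst oe) else tgt (fst oe))"

definition ohead :: "('e \<Rightarrow> 'v) \<Rightarrow> ('e \<Rightarrow> 'v) \<Rightarrow> 'e oedge \<Rightarrow> 'v" where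
  "ohead src tgt oe = (if snd oe then tgt (fst oe) else src (fst oe))"

definition oval :: "real ^ 'e \<Rightarrow> 'e oedge \<Rightarrow> real" where
  "oval x oe = (if snd oe then x $ fst oe else - (x $ fst oe))"

definition connected_graph :: "('e::finite \<Rightarrow> 'v::finite) \<Rightarrow> ('e \<Rightarrow> 'v) \<Rightarrow> bool" where
  "connected_graph src tgt \<longleftrightarrow>
     (\<forall>u v. (u, v) \<in> ({(src e, tgt e) | e. True} \<union> {(tgt e, src e) | e. True})\<^sup>*)"

definition qf :: "real ^ 'e::finite \<Rightarrow> real" where
  "qf x = x \<bullet> x"

definition flows :: "('e::finite \<Rightarrow> 'v) \<Rightarrow> ('e \<Rightarrow> 'v) \<Rightarrow> (real ^ 'e) set" where
  "flows src tgt = {x. \<forall>v. (\<Sum>oe \<in> {oe. otail src tgt oe = v}. oval x oe) = 0}"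

definition int_flows :: "('e::finite \<Rightarrow> 'v) \<Rightarrow> ('e \<Rightarrow> 'v) \<Rightarrow> (real ^ 'e) set" where
  "int_flows src tgt = {x \<in> flows src tgt. \<forall>e. x $ e \<in> \<int>}"

definition voronoi_cell :: "('e::finite \<Rightarrow> 'v) \<Rightarrow> ('e \<Rightarrow> 'v) \<Rightarrow> (real ^ 'e) set" where
  "voronoi_cell src tgt = {x \<in> flows src tgt. \<forall>mu \<in> int_flows src tgt. qf x \<le> qf (x - mu)}"

definition supp :: "real ^ 'e \<Rightarrow> 'e oedge set" where
  "supp x = {oe. oval x oe > 0}"

text \<open>A circuit: a cycle (closed walk without repeated edges or vertices; loops and
  pairs of parallel edges are cycles) oriented as a directed cycle, given as the
  set of its oriented edges.\<close>
definition is_circuit :: "('e \<Rightarrow> 'v) \<Rightarrow> ('e \<Rightarrow> 'v) \<Rightarrow> 'e oedge set \<Rightarrow> bool" where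
  "is_circuit src tgt C \<longleftrightarrow>
     (\<exists>es. es \<noteq> [] \<and> set es = C \<and> distinct (map fst es) \<and>
        distinct (map (otail src tgt) es) \<and>
        (\<forall>i < length es. ohead src tgt (es ! i) = otail src tgt (es ! ((i + 1) mod length es))))"

definition circuit_chain :: "'e oedge set \<Rightarrow> real ^ 'e" where
  "circuit_chain C = (\<chi> e. if (e, True) \<in> C then 1 else if (e, False) \<in> C then -1 else 0)"

definition Xi1 :: "('e::finite \<Rightarrow> 'v) \<Rightarrow> ('e \<Rightarrow> 'v) \<Rightarrow> (real ^ 'e) set" where
  "Xi1 src tgt = {circuit_chain C | C. is_circuit src tgt C}"

definition hyperplane_H :: "('e::finite \<Rightarrow> 'v) \<Rightarrow> ('e \<Rightarrow> 'v) \<Rightarrow> real ^ 'e \<Rightarrow> (real ^ 'e) set" where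
  "hyperplane_H src tgt lam = {x \<in> flows src tgt. 2 * (x \<bullet> lam) = qf lam}"

end

theory Submission
  imports Defs
begin

(* Write |x|_1 for the l1-norm of a chain.  The core fact is that a point x of
   the Voronoi cell satisfies  2<x,nu> <= |nu|_1  for EVERY integer flow nu.  Indeed, the
   positive support of a nonzero flow always contains a directed closed walk without repeated
   oriented edges; its chain gam is an integer flow with entries in {-1,0,1}, hence
   q(gam) = |gam|_1, and it conforms to nu, so |nu|_1 = |gam|_1 + |nu - gam|_1.  The Voronoi
   inequality 2<x,gam> <= q(gam) and induction on |nu|_1 give the bound.
   For circuits lam, mu we have q = |.|_1, so a point x of F lying on H_lam and H_mu gives
   2<x,lam+mu> = |lam|_1 + |mu|_1.  If some oriented edge lies in supp lam with its reverse in
   supp mu, the triangle inequality |lam+mu|_1 <= |lam|_1 + |mu|_1 is strict on that edge,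
   contradicting the bound for nu = lam + mu. *)

section \<open>Divergence and flows\<close>

definition divergence :: "('e::finite \<Rightarrow> 'v) \<Rightarrow> ('e \<Rightarrow> 'v) \<Rightarrow> real^'e \<Rightarrow> 'v \<Rightarrow> real" where
  "divergence src tgt x v =
     (\<Sum>e\<in>UNIV. ((if src e = v then 1 else 0) - (if tgt e = v then 1 else 0)) * x$e)"

lemma sum_tail_eq_divergence:
  fixes src tgt :: "'e::finite \<Rightarrow> 'v"
  shows "(\<Sum>oe\<in>{oe. otail src tgt oe = v}. oval x oe) = divergence src tgt x v"
proof -
  have "(\<Sum>oe\<in>{oe. otail src tgt oe = v}. oval x oe)
      = (\<Sum>oe\<in>(UNIV::('e\<times>bool) set). if otail src tgt oe = v then oval x oe else 0)"
    by (subst sum.inter_filter[symmetric]) auto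
  also have "\<dots> = (\<Sum>e\<in>(UNIV::'e set). \<Sum>b\<in>(UNIV::bool set).
                     if otail src tgt (e,b) = v then oval x (e,b) else 0)"
    by (simp add: UNIV_Times_UNIV[symmetric] sum.cartesian_product del: UNIV_Times_UNIV)
  also have "\<dots> = divergence src tgt x v"
    unfolding divergence_def by (intro sum.cong) (auto simp: UNIV_bool otail_def oval_def)
  finally show ?thesis .
qed

lemma flows_iff_divergence_free: "x \<in> flows src tgt \<longleftrightarrow> (\<forall>v. divergence src tgt x v = 0)"
  by (simp add: flows_def sum_tail_eq_divergence)

lemma divergence_sum: "divergence src tgt (\<Sum>k\<in>K. y k) v = (\<Sum>k\<in>K. divergence src tgt (y k) v)"
  unfolding divergence_def by (simp add: sum_distrib_left sum.swap[of _ K])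

lemma divergence_add: "divergence src tgt (x + y) v = divergence src tgt x v + divergence src tgt y v"
  unfolding divergence_def by (simp add: distrib_left sum.distrib)

lemma divergence_diff: "divergence src tgt (x - y) v = divergence src tgt x v - divergence src tgt y v"
  unfolding divergence_def by (simp add: right_diff_distrib sum_subtractf)

lemma int_flows_add:
  "x \<in> int_flows src tgt \<Longrightarrow> y \<in> int_flows src tgt \<Longrightarrow> x + y \<in> int_flows src tgt"
  unfolding int_flows_def flows_iff_divergence_free by (auto simp: divergence_add Ints_add)

lemma int_flows_diff:
  "x \<in> int_flows src tgt \<Longrightarrow> y \<in> int_flows src tgt \<Longrightarrow> x - y \<in> int_flows src tgt"
  unfolding int_flows_def flows_iff_divergence_free by (auto simp: divergence_diff Ints_diff)

definition edge_chain :: "'e::finite oedge \<Rightarrow> real^'e" where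
  "edge_chain a = (\<chi> e. if e = fst a then (if snd a then 1 else -1) else 0)"

lemma divergence_edge_chain:
  "divergence src tgt (edge_chain a) v =
     (if otail src tgt a = v then 1 else 0) - (if ohead src tgt a = v then 1 else 0)"
proof -
  define c where "c e = ((if src e = v then 1 else 0) - (if tgt e = v then 1 else 0)::real)" for e
  define s where "s = (if snd a then 1 else -1::real)"
  have "divergence src tgt (edge_chain a) v = (\<Sum>e\<in>UNIV. if e = fst a then c e * s else 0)"
    unfolding divergence_def c_def s_def edge_chain_def by (intro sum.cong) auto
  also have "\<dots> = c (fst a) * s" by (simp add: sum.delta')
  finally show ?thesis unfolding c_def s_def otail_def ohead_def by auto
qed

text \<open>A closed walk is a flow: its divergence telescopes.\<close>
lemma closed_walk_flow:
  assumes "\<forall>k<p. ohead src tgt (g k) = otail src tgt (g (Suc k))" "g p = g 0"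
  shows "(\<Sum>k<p. edge_chain (g k)) \<in> flows src tgt"
  unfolding flows_iff_divergence_free
proof
  fix v
  define T where "T k = (if otail src tgt (g k) = v then 1 else 0::real)" for k
  have "divergence src tgt (\<Sum>k<p. edge_chain (g k)) v = (\<Sum>k<p. T k - T (Suc k))"
    unfolding divergence_sum divergence_edge_chain T_def using assms(1) by (intro sum.cong) auto
  also have "\<dots> = - (\<Sum>k<p. T (Suc k) - T k)" by (simp add: sum_negf[symmetric])
  also have "(\<Sum>k<p. T (Suc k) - T k) = T p - T 0" by (rule sum_lessThan_telescope)
  also have "- (T p - T 0) = 0" using assms(2) by (simp add: T_def)
  finally show "divergence src tgt (\<Sum>k<p. edge_chain (g k)) v = 0" .
qed

definition orientation_consistent :: "'e oedge set \<Rightarrow> bool" where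
  "orientation_consistent W \<longleftrightarrow> (\<forall>e. \<not> ((e, True) \<in> W \<and> (e, False) \<in> W))"

lemma sum_edge_chain_eq_circuit_chain:
  fixes g :: "nat \<Rightarrow> 'e::finite oedge"
  assumes "inj_on g {..<p}" "orientation_consistent (g ` {..<p})"
  shows "(\<Sum>k<p. edge_chain (g k)) = circuit_chain (g ` {..<p})"
proof (subst vec_eq_iff, intro allI)
  fix e
  have "(\<Sum>k<p. edge_chain (g k)) $ e = (\<Sum>a\<in>g`{..<p}. edge_chain a $ e)"
    by (simp add: sum.reindex[OF assms(1)])
  also have "\<dots> = (\<Sum>a\<in>g`{..<p}. (if a = (e,True) then 1 else 0) + (if a = (e,False) then -1 else 0))"
  proof (intro sum.cong refl)
    fix a :: "'e oedge"
    show "edge_chain a $ e = (if a = (e,True) then 1 else 0) + (if a = (e,False) then -1 else 0)"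
      by (cases a) (auto simp: edge_chain_def)
  qed
  also have "\<dots> = (if (e,True) \<in> g`{..<p} then 1 else 0) + (if (e,False) \<in> g`{..<p} then -1 else 0)"
    by (simp add: sum.distrib sum.delta')
  also have "\<dots> = circuit_chain (g`{..<p}) $ e"
    using assms(2) by (auto simp: circuit_chain_def orientation_consistent_def)
  finally show "(\<Sum>k<p. edge_chain (g k)) $ e = circuit_chain (g`{..<p}) $ e" .
qed

lemma closed_walk_circuit_chain_flow:
  assumes "inj_on g {..<p}" "orientation_consistent (g ` {..<p})"
    and "\<forall>k<p. ohead src tgt (g k) = otail src tgt (g (Suc k))" "g p = g 0"
  shows "circuit_chain (g ` {..<p}) \<in> flows src tgt"
  using closed_walk_flow[OF assms(3,4)] sum_edge_chain_eq_circuit_chain[OF assms(1,2)] by simp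

text \<open>Chains of edge sets have entries in {-1,0,1}; in particular they are integral.\<close>
lemma circuit_chain_int_flow:
  "circuit_chain W \<in> flows src tgt \<Longrightarrow> circuit_chain W \<in> int_flows src tgt"
  unfolding int_flows_def circuit_chain_def by auto

lemma circuit_flow:
  assumes "is_circuit src tgt C"
  shows "circuit_chain C \<in> flows src tgt"
proof -
  obtain es where es: "es \<noteq> []" "set es = C" "distinct (map fst es)"
    "\<forall>i < length es. ohead src tgt (es ! i) = otail src tgt (es ! ((i + 1) mod length es))"
    using assms unfolding is_circuit_def by blast
  define p where "p = length es"
  define g where "g k = es ! (k mod p)" for k
  have "distinct es" using es(3) by (simp add: distinct_map)
  then have inj: "inj_on g {..<p}"
    unfolding g_def p_def by (auto simp: inj_on_def nth_eq_iff_index_eq)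
  have img: "g ` {..<p} = C"
    unfolding g_def p_def es(2)[symmetric] by (auto simp: set_conv_nth)
  have "orientation_consistent C"
    unfolding orientation_consistent_def
  proof (intro allI notI)
    fix e assume "(e,True) \<in> C \<and> (e,False) \<in> C"
    then obtain i j where "i < length es" "j < length es" "es!i = (e,True)" "es!j = (e,False)"
      using es(2) by (auto simp: in_set_conv_nth)
    moreover have "i \<noteq> j" using calculation by auto
    ultimately show False using es(3) unfolding distinct_conv_nth by (metis fst_conv length_map nth_map)
  qed
  moreover have "\<forall>k<p. ohead src tgt (g k) = otail src tgt (g (Suc k))"
    using es(4) unfolding g_def p_def by simp
  moreover have "g p = g 0" unfolding g_def by simp
  ultimately show ?thesis using closed_walk_circuit_chain_flow[OF inj] img by simp
qed

definition l1 :: "real^'e::finite \<Rightarrow> real" where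
  "l1 x = (\<Sum>e\<in>UNIV. \<bar>x$e\<bar>)"

lemma l1_nonneg: "l1 x \<ge> 0"
  unfolding l1_def by (simp add: sum_nonneg)

lemma qf_sum: "qf x = (\<Sum>e\<in>UNIV. x$e * x$e)"
  unfolding qf_def inner_vec_def by simp

lemma qf_circuit_chain: "qf (circuit_chain W) = l1 (circuit_chain W)"
  unfolding qf_sum l1_def by (intro sum.cong) (auto simp: circuit_chain_def)

lemma l1_add_strict_if_opposite:
  assumes "oe \<in> supp lam" "orev oe \<in> supp mu"
  shows "l1 (lam + mu) < l1 lam + l1 mu"
  unfolding l1_def sum.distrib[symmetric]
proof (rule sum_strict_mono_ex1)
  show "\<forall>e\<in>UNIV. \<bar>(lam + mu) $ e\<bar> \<le> \<bar>lam $ e\<bar> + \<bar>mu $ e\<bar>" by (simp add: abs_triangle_ineq)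
  show "\<exists>e\<in>UNIV. \<bar>(lam + mu) $ e\<bar> < \<bar>lam $ e\<bar> + \<bar>mu $ e\<bar>"
    using assms by (intro bexI[of _ "fst oe"]) (auto simp: supp_def oval_def orev_def split: if_splits)
qed auto

section \<open>Cycles in the positive support of a flow\<close>

lemma supp_orientation_consistent:
  assumes "W \<subseteq> supp x"
  shows "orientation_consistent W"
  unfolding orientation_consistent_def
proof (intro allI notI)
  fix e assume "(e, True) \<in> W \<and> (e, False) \<in> W"
  then have "oval x (e, True) > 0" "oval x (e, False) > 0" using assms unfolding supp_def by auto
  then show False unfolding oval_def by simp
qed

lemma flow_positive_successor:
  assumes flow: "x \<in> flows src tgt" and a: "a \<in> supp x"
  shows "\<exists>b \<in> supp x. otail src tgt b = ohead src tgt a"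
proof (rule ccontr)
  assume "\<not> ?thesis"
  then have nonpos: "\<And>b. otail src tgt b = ohead src tgt a \<Longrightarrow> oval x b \<le> 0"
    unfolding supp_def by (metis mem_Collect_eq not_less)
  define S where "S = {oe. otail src tgt oe = ohead src tgt a}"
  have rev_in_S: "orev a \<in> S" unfolding S_def orev_def otail_def ohead_def by auto
  have rev_neg: "oval x (orev a) < 0" using a unfolding supp_def oval_def orev_def by auto
  have "(\<Sum>oe\<in>S. oval x oe) = oval x (orev a) + (\<Sum>oe\<in>S - {orev a}. oval x oe)"
    using rev_in_S by (simp add: sum.remove)
  also have "(\<Sum>oe\<in>S - {orev a}. oval x oe) \<le> 0"
    using nonpos unfolding S_def by (intro sum_nonpos) auto
  then have "oval x (orev a) + (\<Sum>oe\<in>S - {orev a}. oval x oe) < 0" using rev_neg by simp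
  finally show False using flow unfolding flows_def S_def by simp
qed

lemma sequence_has_simple_loop:
  fixes f :: "nat \<Rightarrow> 'a::finite"
  shows "\<exists>i p. 0 < p \<and> f (i + p) = f i \<and> inj_on (\<lambda>k. f (i + k)) {..<p}"
proof -
  have "\<not> inj f"
  proof
    assume "inj f"
    then have "finite (UNIV :: nat set)" using finite_imageD[of f UNIV] by simp
    then show False by simp
  qed
  then obtain i j where "i \<noteq> j" "f i = f j" unfolding inj_def by blast
  then have ex: "\<exists>j. \<exists>i<j. f i = f j" by (metis linorder_neqE_nat)
  define j0 where "j0 = (LEAST j. \<exists>i<j. f i = f j)"
  obtain i0 where i0: "i0 < j0" "f i0 = f j0"
    using LeastI_ex[OF ex] unfolding j0_def by blast
  have inj: "inj_on f {..<j0}"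
  proof (rule inj_onI, rule ccontr)
    fix a b assume ab: "a \<in> {..<j0}" "b \<in> {..<j0}" "f a = f b" "a \<noteq> b"
    then consider "a < b" | "b < a" by linarith
    then have "\<exists>i<max a b. f i = f (max a b)" by cases (use ab(3) in auto)
    then have "j0 \<le> max a b" unfolding j0_def by (rule Least_le)
    with ab show False by auto
  qed
  have "inj_on (\<lambda>k. f (i0 + k)) {..<j0 - i0}"
  proof (rule inj_onI)
    fix a b assume "a \<in> {..<j0 - i0}" "b \<in> {..<j0 - i0}" "f (i0 + a) = f (i0 + b)"
    then show "a = b" using inj_onD[OF inj, of "i0 + a" "i0 + b"] by auto
  qed
  with i0 show ?thesis by (intro exI[of _ i0] exI[of _ "j0 - i0"]) auto
qed

lemma flow_support_contains_closed_walk: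
  fixes x :: "real^'e::finite"
  assumes flow: "x \<in> flows src tgt" and nz: "x \<noteq> 0"
  obtains g p where "0 < p" "inj_on g {..<p}" "g p = g 0"
    "\<forall>k<p. ohead src tgt (g k) = otail src tgt (g (Suc k))" "g ` {..<p} \<subseteq> supp x"
proof -
  obtain e0 where "x $ e0 \<noteq> 0" using nz by (auto simp: vec_eq_iff)
  then have start: "(e0, x $ e0 > 0) \<in> supp x" unfolding supp_def oval_def by auto
  define nxt where "nxt a = (SOME b. b \<in> supp x \<and> otail src tgt b = ohead src tgt a)" for a
  have nxt: "nxt a \<in> supp x \<and> otail src tgt (nxt a) = ohead src tgt a" if "a \<in> supp x" for a
  proof -
    have "\<exists>b. b \<in> supp x \<and> otail src tgt b = ohead src tgt a"
      using flow_positive_successor[OF flow that] by blast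
    then show ?thesis unfolding nxt_def by (rule someI_ex)
  qed
  define f where "f n = (nxt ^^ n) (e0, x $ e0 > 0)" for n
  have f_supp: "f n \<in> supp x" for n by (induction n) (auto simp: f_def start nxt)
  have f_step: "ohead src tgt (f n) = otail src tgt (f (Suc n))" for n
    using nxt[OF f_supp[of n]] by (simp add: f_def)
  obtain i p where loop: "0 < p" "f (i + p) = f i" "inj_on (\<lambda>k. f (i + k)) {..<p}"
    using sequence_has_simple_loop[of f] by blast
  show ?thesis
  proof (rule that[of p "\<lambda>k. f (i + k)"])
    show "\<forall>k<p. ohead src tgt (f (i + k)) = otail src tgt (f (i + Suc k))"
      using f_step by simp
    show "(\<lambda>k. f (i + k)) ` {..<p} \<subseteq> supp x" using f_supp by auto
  qed (use loop in simp_all)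
qed

section \<open>Conformal cycles of integer flows\<close>

lemma circuit_chain_conforms:
  assumes int: "\<forall>e. nu $ e \<in> \<int>" and W_supp: "W \<subseteq> supp nu"
  shows "l1 nu = l1 (circuit_chain W) + l1 (nu - circuit_chain W)"
proof -
  define gam where "gam = circuit_chain W"
  have consistent: "orientation_consistent W" using W_supp by (rule supp_orientation_consistent)
  have per_edge: "\<bar>nu$e\<bar> = \<bar>gam$e\<bar> + \<bar>nu$e - gam$e\<bar>" for e
  proof -
    consider "(e,True) \<in> W" | "(e,False) \<in> W" | "(e,True) \<notin> W" "(e,False) \<notin> W" by blast
    then show ?thesis
    proof cases
      case 1
      then have "nu $ e > 0" using W_supp unfolding supp_def oval_def by auto
      moreover have "gam $ e = 1" using 1 unfolding gam_def circuit_chain_def by simp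
      ultimately show ?thesis using Ints_nonzero_abs_ge1[of "nu $ e"] int by simp
    next
      case 2
      then have "nu $ e < 0" using W_supp unfolding supp_def oval_def by auto
      moreover have "gam $ e = -1"
        using 2 consistent unfolding gam_def circuit_chain_def orientation_consistent_def by auto
      ultimately show ?thesis using Ints_nonzero_abs_ge1[of "nu $ e"] int by simp
    qed (simp add: gam_def circuit_chain_def)
  qed
  show ?thesis unfolding l1_def gam_def[symmetric] by (simp add: per_edge sum.distrib[symmetric])
qed

lemma circuit_chain_l1_ge_1:
  assumes "a \<in> W" "orientation_consistent W"
  shows "1 \<le> l1 (circuit_chain W)"
proof -
  have "\<bar>circuit_chain W $ fst a\<bar> = 1"
  proof (cases a)
    case (Pair e b)
    then show ?thesis using assms unfolding circuit_chain_def orientation_consistent_def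
      by (cases b) auto
  qed
  moreover have "\<bar>circuit_chain W $ fst a\<bar> \<le> l1 (circuit_chain W)"
    unfolding l1_def by (rule member_le_sum) auto
  ultimately show ?thesis by simp
qed

lemma conformal_cycle:
  assumes nu: "nu \<in> int_flows src tgt" and nz: "nu \<noteq> 0"
  obtains gam where "gam \<in> int_flows src tgt" "qf gam = l1 gam" "1 \<le> l1 gam"
    "l1 nu = l1 gam + l1 (nu - gam)"
proof -
  have flow: "nu \<in> flows src tgt" and int: "\<forall>e. nu $ e \<in> \<int>"
    using nu by (simp_all add: int_flows_def)
  obtain g p where p: "0 < p" and inj: "inj_on g {..<p}" and closed: "g p = g 0"
    and step: "\<forall>k<p. ohead src tgt (g k) = otail src tgt (g (Suc k))"
    and W_supp: "g ` {..<p} \<subseteq> supp nu"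
    by (rule flow_support_contains_closed_walk[OF flow nz])
  define W where "W = g ` {..<p}"
  have consistent: "orientation_consistent W"
    using W_supp unfolding W_def by (rule supp_orientation_consistent)
  have "circuit_chain W \<in> flows src tgt"
    using closed_walk_circuit_chain_flow[OF inj _ step closed] consistent unfolding W_def by simp
  then have "circuit_chain W \<in> int_flows src tgt" by (rule circuit_chain_int_flow)
  moreover have "g 0 \<in> W" unfolding W_def using p by simp
  then have "1 \<le> l1 (circuit_chain W)" using consistent by (rule circuit_chain_l1_ge_1)
  moreover have "l1 nu = l1 (circuit_chain W) + l1 (nu - circuit_chain W)"
    using int W_supp unfolding W_def by (rule circuit_chain_conforms)
  ultimately show ?thesis using that qf_circuit_chain by blast
qed

section \<open>The l1-bound on the Voronoi cell\<close>

lemma voronoi_inequality: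
  assumes "x \<in> voronoi_cell src tgt" "g \<in> int_flows src tgt"
  shows "2 * (x \<bullet> g) \<le> qf g"
proof -
  have "qf x \<le> qf (x - g)" using assms unfolding voronoi_cell_def by auto
  then show ?thesis unfolding qf_def by (simp add: inner_diff_left inner_diff_right inner_commute)
qed

text \<open>Peeling off conformal cycles, each satisfying the Voronoi inequality with
  q = l1, bounds the pairing with any integer flow by its l1-norm.\<close>
lemma voronoi_l1_bound:
  assumes x: "x \<in> voronoi_cell src tgt" and nu: "nu \<in> int_flows src tgt"
  shows "2 * (x \<bullet> nu) \<le> l1 nu"
proof -
  have "l1 nu < real n \<Longrightarrow> nu \<in> int_flows src tgt \<Longrightarrow> 2 * (x \<bullet> nu) \<le> l1 nu" for n
  proof (induction n arbitrary: nu)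
    case 0
    then show ?case using l1_nonneg[of nu] by simp
  next
    case (Suc n)
    show ?case
    proof (cases "nu = 0")
      case False
      then obtain gam where gam: "gam \<in> int_flows src tgt" "qf gam = l1 gam" "1 \<le> l1 gam"
        "l1 nu = l1 gam + l1 (nu - gam)"
        using conformal_cycle[OF Suc.prems(2)] by blast
      have "2 * (x \<bullet> (nu - gam)) \<le> l1 (nu - gam)"
        using Suc.IH int_flows_diff[OF Suc.prems(2) gam(1)] Suc.prems(1) gam(3,4) by simp
      moreover have "2 * (x \<bullet> gam) \<le> l1 gam" using voronoi_inequality[OF x gam(1)] gam(2) by simp
      ultimately show ?thesis using gam(4) by (simp add: inner_diff_right)
    qed (simp add: l1_nonneg)
  qed
  moreover obtain n where "l1 nu < real n" using reals_Archimedean2 by blast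
  ultimately show ?thesis using nu by blast
qed

lemma Xi1_int_flow:
  assumes "lam \<in> Xi1 src tgt"
  shows "lam \<in> int_flows src tgt" "qf lam = l1 lam"
proof -
  obtain C where C: "is_circuit src tgt C" and lam: "lam = circuit_chain C"
    using assms unfolding Xi1_def by blast
  show "lam \<in> int_flows src tgt" unfolding lam by (rule circuit_chain_int_flow[OF circuit_flow[OF C]])
  show "qf lam = l1 lam" unfolding lam by (rule qf_circuit_chain)
qed

theorem mainTheorem5:
  fixes src tgt :: "'e::finite \<Rightarrow> 'v::finite"
    and F :: "(real ^ 'e) set" and lam mu :: "real ^ 'e"
  assumes "connected_graph src tgt"
    and "F face_of voronoi_cell src tgt"
    and "F \<noteq> {}"
    and "lam \<in> Xi1 src tgt" and "mu \<in> Xi1 src tgt" and "lam \<noteq> mu"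
    and "F \<subseteq> hyperplane_H src tgt lam \<inter> hyperplane_H src tgt mu"
  shows "\<not> (\<exists>oe. oe \<in> supp lam \<and> orev oe \<in> supp mu)"
proof
  assume "\<exists>oe. oe \<in> supp lam \<and> orev oe \<in> supp mu"
  then have strict: "l1 (lam + mu) < l1 lam + l1 mu" using l1_add_strict_if_opposite by blast
  obtain x where "x \<in> F" using assms(3) by blast
  then have x_cell: "x \<in> voronoi_cell src tgt" and on_H: "2 * (x \<bullet> lam) = qf lam" "2 * (x \<bullet> mu) = qf mu"
    using face_of_imp_subset[OF assms(2)] assms(7) unfolding hyperplane_H_def by auto
  have "lam + mu \<in> int_flows src tgt"
    using int_flows_add Xi1_int_flow(1)[OF assms(4)] Xi1_int_flow(1)[OF assms(5)] by blast
  then have "2 * (x \<bullet> (lam + mu)) \<le> l1 (lam + mu)" using voronoi_l1_bound[OF x_cell] by blast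
  then have "l1 lam + l1 mu \<le> l1 (lam + mu)"
    using on_H Xi1_int_flow(2)[OF assms(4)] Xi1_int_flow(2)[OF assms(5)] by (simp add: inner_add_right)
  with strict show False by simp
qed

end
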